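(* For any total budget $\mathrm{TB}\in\mathbb N_0$, if $G$ and $H$ are numbers, then $G+H$ is a number.
   Context: Game forms are defined recursively: $G=\{G^{\mathcal L}\mid G^{\mathcal R}\}$ with finite sets of Left and Right options, and finite birthday. The budget set for total budget $\mathrm{TB}$ is $\mathcal B=\{0,\dots,\mathrm{TB},\hat 0,\dots,\widehat{\mathrm{TB}}\}$: state $p$ (resp. $\hat p$) means Left holds $p$ dollars and Right holds $\mathrm{TB}-p$, and Right (resp. Left) holds the tie-breaking marker. Play of $(G,\tilde p)$: at every position (terminal ones included) both players bid simultaneously, Left $\ell\in\{0,\dots,p\}$, Right $r\in\{0,\dots,\mathrm{TB}-p\}$. If Left holds the marker (state $\hat p$): if $\ell>r$ Left moves to $(G^L,\widehat{p-\ell})$, or, including the marker (allowed when $\ell\ge r$), to $(G^L,p-\ell)$; if $\ell=r$ Left wins, the marker passes to Right, play continues at $(G^L,p-\ell)$; if $\ell<r$ Right moves to $(G^R,\widehat{p+r})$. Symmetrically when Right holds the marker (state $p$): if $r>\ell$ Right moves to $(G^R,p+r)$ or, including the marker, to $(G^R,\widehat{p+r})$; if $r=\ell$ Right wins, the marker passes to Left, play continues at $(G^R,\widehat{p+r})$; if $r<\ell$ Left moves to $(G^L,p-\ell)$. A player who wins a bid but has no option loses. $o(G,\tilde p)\in\{\mathrm L,\mathrm R\}$ is the winner under optimal play; $\mathrm L>\mathrm R$. Disjunctive sum $G+H=\{G^{\mathcal L}+H,G+H^{\mathcal L}\mid G^{\mathcal R}+H,G+H^{\mathcal R}\}$. $G\ge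 H$ means $o(G+X,\tilde p)\ge o(H+X,\tilde p)$ for all game forms $X$ and all $\tilde p\in\mathcal B$; $G>H$ means $G\ge H$ and not $H\ge G$; $G<H$ means $H>G$. A game form $G$ is a number if all its options are numbers and $G^L<G<G^R$ for all $G^L\in G^{\mathcal L}$, $G^R\in G^{\mathcal R}$. *)

theory Defs
  imports Main "HOL-Library.FSet"
begin

datatype game = Game (lopts: "game fset") (ropts: "game fset")

text \<open>Budget states: a pair (p, m) with p \<le> TB Left's money; m = True means
  Left holds the tie-breaking marker (the hatted state \<open>p\<close>), m = False means Right holds it.\<close>

text \<open>Left chooses a bid l \<le> p (simultaneously with Right's bid r \<le> TB - p) such that for every r
  the resulting continuation is winning for Left: when Left wins the bid she chooses an option
  (and whether to include the marker, when allowed); when Right wins the bid every choice of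
  Right must still leave a Left win.  A player who wins a bid but has no option loses
  (empty existential / empty universal).\<close>
primrec lwins :: "nat \<Rightarrow> game \<Rightarrow> nat \<Rightarrow> bool \<Rightarrow> bool" where
  "lwins TB (Game GL GR) = (\<lambda>p m.
     (\<exists>l\<le>p. \<forall>r\<le>TB - p.
        (if m then
           (if r < l then (\<exists>f\<in>fset (fimage (lwins TB) GL). f (p - l) True \<or> f (p - l) False)
            else if l = r then (\<exists>f\<in>fset (fimage (lwins TB) GL). f (p - l) False)
            else (\<forall>f\<in>fset (fimage (lwins TB) GR). f (p + r) True))
         else
           (if l < r then (\<forall>f\<in>fset (fimage (lwins TB) GR). f (p + r) False \<and> f (p + r) True)
            else if l = r then (\<forall>f\<in>fset (fimage (lwins TB) GR). f (p + r) True)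
            else (\<exists>f\<in>fset (fimage (lwins TB) GL). f (p - l) False)))))"

datatype outcome = OL | OR

definition outc :: "nat \<Rightarrow> game \<Rightarrow> nat \<Rightarrow> bool \<Rightarrow> outcome" where
  "outc TB G p m = (if lwins TB G p m then OL else OR)"

definition outcome_le :: "outcome \<Rightarrow> outcome \<Rightarrow> bool" where
  "outcome_le a b = (a = OR \<or> b = OL)"

text \<open>Disjunctive sum (auxiliary recursion on the second summand).\<close>
primrec plusH :: "(game \<Rightarrow> game) fset \<Rightarrow> (game \<Rightarrow> game) fset \<Rightarrow> game \<Rightarrow> game" where
  "plusH fl fr (Game HL HR) =
     Game (fimage (\<lambda>f. f (Game HL HR)) fl |\<union>| fimage (plusH fl fr) HL)
          (fimage (\<lambda>f. f (Game HL HR)) fr |\<union>| fimage (plusH fl fr) HR)"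

primrec gplus :: "game \<Rightarrow> game \<Rightarrow> game" where
  "gplus (Game GL GR) = plusH (fimage gplus GL) (fimage gplus GR)"

lemma gplus_eq:
  "gplus (Game GL GR) (Game HL HR) =
     Game (fimage (\<lambda>g. gplus g (Game HL HR)) GL |\<union>| fimage (\<lambda>h. gplus (Game GL GR) h) HL)
          (fimage (\<lambda>g. gplus g (Game HL HR)) GR |\<union>| fimage (\<lambda>h. gplus (Game GL GR) h) HR)"
  by (simp add: fset.map_comp comp_def)

definition game_ge :: "nat \<Rightarrow> game \<Rightarrow> game \<Rightarrow> bool" where
  "game_ge TB G H = (\<forall>X p m. p \<le> TB \<longrightarrow>
      outcome_le (outc TB (gplus H X) p m) (outc TB (gplus G X) p m))"

definition game_gt :: "nat \<Rightarrow> game \<Rightarrow> game \<Rightarrow> bool" where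
  "game_gt TB G H = (game_ge TB G H \<and> \<not> game_ge TB H G)"

definition game_lt :: "nat \<Rightarrow> game \<Rightarrow> game \<Rightarrow> bool" where
  "game_lt TB G H = game_gt TB H G"

inductive is_number :: "nat \<Rightarrow> game \<Rightarrow> bool" for TB where
  "\<lbrakk> \<forall>x\<in>fset GL. is_number TB x; \<forall>x\<in>fset GR. is_number TB x;
     \<forall>gl\<in>fset GL. game_lt TB gl (Game GL GR);
     \<forall>gr\<in>fset GR. game_lt TB (Game GL GR) gr \<rbrakk>
   \<Longrightarrow> is_number TB (Game GL GR)"

end

theory Submission
  imports Defs
begin

text \<open>
  Since the options of \<open>G + H\<close> are numbers by induction, everything hinges on the order
  conditions, e.g. \<open>G\<^sup>L + H < G + H\<close>; they follow once adding a number is strictly monotone, i.e.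
  once \<open>H + -H\<close> is equivalent to zero for every number \<open>H\<close>.

  \<open>H + -H \<ge> 0\<close>: in \<open>H + -H + X\<close> Left copies her strategy for \<open>X\<close>. A Right move in \<open>H + -H\<close>
  leads to a game \<open>K \<ge> 0\<close> that has a Left option \<open>\<ge> 0\<close> and whose Right options are \<open>\<ge> K\<close>,
  because \<open>H\<close> is a number. Adding such a \<open>K\<close> turns a Left win of \<open>X\<close> without the marker into
  one with the marker, so Right's move never helps him.

  \<open>H + -H \<le> 0\<close> follows by negation. This uses determinacy (Left loses \<open>G\<close> iff she wins \<open>-G\<close>
  in the mirrored budget state), which holds round by round because the marker is worth less
  than a dollar.
\<close>

section \<open>Negation and the algebra of sums\<close>

declare gplus.simps[simp del] plusH.simps[simp del]

definition gzero :: game where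
  "gzero = Game {||} {||}"

primrec gneg :: "game \<Rightarrow> game" where
  "gneg (Game GL GR) = Game (fimage gneg GR) (fimage gneg GL)"

lemma lopts_gplus: "lopts (gplus G H) = (\<lambda>g. gplus g H) |`| lopts G |\<union>| gplus G |`| lopts H"
  by (cases G; cases H) (simp add: gplus_eq)

lemma ropts_gplus: "ropts (gplus G H) = (\<lambda>g. gplus g H) |`| ropts G |\<union>| gplus G |`| ropts H"
  by (cases G; cases H) (simp add: gplus_eq)

lemma lopts_gneg: "lopts (gneg G) = gneg |`| ropts G"
  by (cases G) simp

lemma ropts_gneg: "ropts (gneg G) = gneg |`| lopts G"
  by (cases G) simp

lemma gneg_gneg [simp]: "gneg (gneg G) = G"
  by (induction G) (simp add: fset.map_comp fset.map_ident_strong)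

lemma gplus_comm: "gplus G H = gplus H G"
proof (induction G arbitrary: H rule: game.induct)
  case G: (Game GL GR)
  show ?case
  proof (induction H rule: game.induct)
    case H: (Game HL HR)
    show ?case
      by (rule game.expand) (simp add: lopts_gplus ropts_gplus G.IH[symmetric] H.IH sup_commute cong: fimage_cong)
  qed
qed

lemma gplus_assoc: "gplus (gplus G H) K = gplus G (gplus H K)"
proof (induction G arbitrary: H K)
  case G: (Game GL GR)
  show ?case
  proof (induction H arbitrary: K)
    case H: (Game HL HR)
    show ?case
    proof (induction K)
      case K: (Game KL KR)
      show ?case
        by (rule game.expand)
          (simp add: lopts_gplus ropts_gplus G.IH H.IH K.IH fimage_funion sup_assoc fset.map_comp comp_def cong: fimage_cong)
    qed
  qed
qed

lemma gplus_gzero [simp]: "gplus gzero G = G"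
  by (induction G) (simp add: gzero_def gplus_eq fset.map_ident_strong)

lemma gneg_gzero [simp]: "gneg gzero = gzero"
  by (simp add: gzero_def)

lemma gneg_gplus: "gneg (gplus G H) = gplus (gneg G) (gneg H)"
proof (induction G arbitrary: H rule: game.induct)
  case G: (Game GL GR)
  show ?case
  proof (induction H rule: game.induct)
    case H: (Game HL HR)
    show ?case
      by (rule game.expand)
        (simp add: lopts_gplus ropts_gplus lopts_gneg ropts_gneg G.IH H.IH fimage_funion fset.map_comp comp_def cong: fimage_cong)
  qed
qed

section \<open>Simultaneous bidding\<close>

text \<open>One bidding round seen by the holder of the marker, who bids \<open>x\<close> against \<open>y\<close>: she wins
  outright (\<open>A x\<close>), wins the tie and hands over the marker (\<open>B x\<close>), or is outbid (\<open>C y\<close>).\<close>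

definition bid_outcome :: "(nat \<Rightarrow> bool) \<Rightarrow> (nat \<Rightarrow> bool) \<Rightarrow> (nat \<Rightarrow> bool) \<Rightarrow> nat \<Rightarrow> nat \<Rightarrow> bool" where
  "bid_outcome A B C x y = (if y < x then A x else if x = y then B x else C y)"

text \<open>The hypotheses say that the marker is worth less than a dollar.\<close>

lemma bidding_determined:
  assumes B_A: "\<And>x. B x \<Longrightarrow> A x"
    and A_B: "\<And>x x'. A x \<Longrightarrow> x' < x \<Longrightarrow> x \<le> a \<Longrightarrow> B x'"
  shows "(\<exists>x\<le>a. \<forall>y\<le>b. bid_outcome A B C x y) \<longleftrightarrow> \<not> (\<exists>y\<le>b. \<forall>x\<le>a. \<not> bid_outcome A B C x y)"
proof
  show "\<exists>x\<le>a. \<forall>y\<le>b. bid_outcome A B C x y \<Longrightarrow> \<not> (\<exists>y\<le>b. \<forall>x\<le>a. \<not> bid_outcome A B C x y)"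
    by blast
next
  assume no_win: "\<not> (\<exists>y\<le>b. \<forall>x\<le>a. \<not> bid_outcome A B C x y)"
  define R where "R = Max (insert 0 {y. 0 < y \<and> y \<le> b \<and> \<not> C y})"
  have fin: "finite (insert 0 {y. 0 < y \<and> y \<le> b \<and> \<not> C y})"
    by (rule finite_subset[of _ "{..b}"]) auto
  have "R \<in> insert 0 {y. 0 < y \<and> y \<le> b \<and> \<not> C y}"
    unfolding R_def using fin by (rule Max_in) simp
  then have R_le: "R \<le> b" and not_C_R: "0 < R \<Longrightarrow> \<not> C R"
    by auto
  have C_above: "C y" if "R < y" "y \<le> b" for y
    using Max_ge[OF fin, of y] that unfolding R_def by fastforce
  show "\<exists>x\<le>a. \<forall>y\<le>b. bid_outcome A B C x y"
  proof (rule ccontr)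
    assume no_bid: "\<not> (\<exists>x\<le>a. \<forall>y\<le>b. bid_outcome A B C x y)"
    have not_B: "\<not> B x" if "R \<le> x" "x \<le> a" for x
    proof
      assume "B x"
      then have "\<forall>y\<le>b. bid_outcome A B C x y"
        using B_A C_above \<open>R \<le> x\<close> by (simp add: bid_outcome_def)
      with no_bid \<open>x \<le> a\<close> show False
        by blast
    qed
    have not_A: "\<not> A x" if "R < x" "x \<le> a" for x
    proof
      assume "A x"
      then have "B (x - 1)"
        using A_B that by simp
      moreover have "R \<le> x - 1" "x - 1 \<le> a"
        using that by auto
      ultimately show False
        using not_B by blast
    qed
    have "\<forall>x\<le>a. \<not> bid_outcome A B C x R"
      using not_A not_B not_C_R unfolding bid_outcome_def by auto
    with R_le no_win show False
      by blast
  qed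
qed

section \<open>Winning positions\<close>

text \<open>\<open>M\<close> is the set of marker states the winner of the bid may leave after moving.\<close>

definition lwins_some :: "nat \<Rightarrow> game fset \<Rightarrow> nat \<Rightarrow> bool set \<Rightarrow> bool" where
  "lwins_some TB Gs p M \<longleftrightarrow> (\<exists>g\<in>fset Gs. \<exists>m\<in>M. lwins TB g p m)"

definition lwins_all :: "nat \<Rightarrow> game fset \<Rightarrow> nat \<Rightarrow> bool set \<Rightarrow> bool" where
  "lwins_all TB Gs p M \<longleftrightarrow> (\<forall>g\<in>fset Gs. \<forall>m\<in>M. lwins TB g p m)"

definition lwins_round :: "nat \<Rightarrow> game \<Rightarrow> nat \<Rightarrow> bool \<Rightarrow> nat \<Rightarrow> nat \<Rightarrow> bool" where
  "lwins_round TB G p m l r \<longleftrightarrow>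
    (if m then (r < l \<longrightarrow> lwins_some TB (lopts G) (p - l) UNIV)
             \<and> (r = l \<longrightarrow> lwins_some TB (lopts G) (p - l) {False})
             \<and> (l < r \<longrightarrow> lwins_all TB (ropts G) (p + r) {True})
     else (r < l \<longrightarrow> lwins_some TB (lopts G) (p - l) {False})
             \<and> (r = l \<longrightarrow> lwins_all TB (ropts G) (p + r) {True})
             \<and> (l < r \<longrightarrow> lwins_all TB (ropts G) (p + r) UNIV))"

lemma lwins_iff_round: "lwins TB G p m \<longleftrightarrow> (\<exists>l\<le>p. \<forall>r\<le>TB - p. lwins_round TB G p m l r)"
proof (cases G)
  case (Game GL GR)
  have "lwins TB (Game GL GR) p b \<longleftrightarrow> (\<exists>l\<le>p. \<forall>r\<le>TB - p. lwins_round TB (Game GL GR) p b l r)" for b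
    by (induction b) (simp_all add: lwins_round_def lwins_some_def lwins_all_def ex_bool_eq all_bool_eq;
        rule ex_cong1, rule conj_cong[OF refl], rule all_cong1, auto)+
  with Game show ?thesis
    by simp
qed

declare lwins.simps [simp del]

lemma lwins_round_transfer:
  assumes "lwins_round TB G p m l r"
    and "\<And>M. lwins_some TB (lopts G) (p - l) M \<Longrightarrow> lwins_some TB (lopts G') (q - l) M"
    and "lwins_all TB (ropts G) (p + r) {True} \<Longrightarrow> lwins_all TB (ropts G') (q + r) {True}"
    and "\<not> m \<Longrightarrow> lwins_all TB (ropts G) (p + r) UNIV \<Longrightarrow> lwins_all TB (ropts G') (q + r) UNIV"
  shows "lwins_round TB G' q m l r"
  using assms unfolding lwins_round_def by (cases m) auto

lemma lwins_mono: "lwins TB G p m \<Longrightarrow> p \<le> q \<Longrightarrow> lwins TB G q m"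
proof (induction G arbitrary: p q m)
  case (Game GL GR)
  from Game.prems(1) obtain l where "l \<le> p" and win: "\<forall>r\<le>TB - p. lwins_round TB (Game GL GR) p m l r"
    unfolding lwins_iff_round by blast
  have some: "lwins_some TB GL (q - l) M" if "lwins_some TB GL (p - l) M" for M
    using that Game.IH(1) Game.prems(2) unfolding lwins_some_def by (meson diff_le_mono)
  have all: "lwins_all TB GR (q + r) M" if "lwins_all TB GR (p + r) M" for r M
    using that Game.IH(2) Game.prems(2) unfolding lwins_all_def by (meson add_le_mono1)
  have "lwins_round TB (Game GL GR) q m l r" if "r \<le> TB - q" for r
  proof (rule lwins_round_transfer)
    show "lwins_round TB (Game GL GR) p m l r"
      using win that Game.prems(2) by simp
  qed (simp_all add: some all)
  with \<open>l \<le> p\<close> Game.prems(2) show ?case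
    unfolding lwins_iff_round by (intro exI[of _ l]) auto
qed

lemma lwins_some_mono: "lwins_some TB Gs a M \<Longrightarrow> a \<le> b \<Longrightarrow> lwins_some TB Gs b M"
  unfolding lwins_some_def using lwins_mono by blast

lemma lwins_all_mono: "lwins_all TB Gs a M \<Longrightarrow> a \<le> b \<Longrightarrow> lwins_all TB Gs b M"
  unfolding lwins_all_def using lwins_mono by blast

lemma lwins_dollar_beats_marker: "lwins TB G p True \<Longrightarrow> p < q \<Longrightarrow> lwins TB G q False"
proof (induction G arbitrary: p q)
  case (Game GL GR)
  have some_drop: "lwins_some TB GL b {False}" if "lwins_some TB GL a UNIV" "a < b" for a b
    using that Game.IH(1) lwins_mono[of TB _ a False b] unfolding lwins_some_def by (simp add: ex_bool_eq) blast
  have all_gain: "lwins_all TB GR b UNIV" if "lwins_all TB GR a {True}" "a < b" for a b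
    using that Game.IH(2) lwins_mono[of TB _ a True b] unfolding lwins_all_def by (auto simp: all_bool_eq)
  from Game.prems(1) obtain l where "l \<le> p" and win: "\<forall>r\<le>TB - p. lwins_round TB (Game GL GR) p True l r"
    unfolding lwins_iff_round by blast
  show ?case
  proof (cases "l \<le> TB - p")
    case False
    \<comment> \<open>Right cannot match the bid \<open>l\<close>, so Left wins the bid with it even without the marker.\<close>
    have "lwins_some TB GL (p - l) UNIV"
      using win False by (auto simp: lwins_round_def)
    then have "lwins_some TB GL (q - l) {False}"
      using some_drop \<open>l \<le> p\<close> Game.prems(2) by simp
    then have "\<forall>r\<le>TB - q. lwins_round TB (Game GL GR) q False l r"
      using False Game.prems(2) by (auto simp: lwins_round_def)
    then show ?thesis
      using \<open>l \<le> p\<close> Game.prems(2) unfolding lwins_iff_round by (intro exI[of _ l]) auto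
  next
    case True
    \<comment> \<open>Left outbids her winning bid \<open>l\<close> by the extra dollar.\<close>
    have "\<forall>r\<le>TB - q. lwins_round TB (Game GL GR) q False (Suc l) r"
    proof (intro allI impI)
      fix r assume "r \<le> TB - q"
      then have "lwins_round TB (Game GL GR) p True l l" "lwins_round TB (Game GL GR) p True l r"
        using win True Game.prems(2) by auto
      then have tie: "lwins_some TB GL (p - l) {False}"
        and right: "l < r \<Longrightarrow> lwins_all TB GR (p + r) {True}"
        by (simp_all add: lwins_round_def)
      have "p - l \<le> q - Suc l" "p + r < q + r"
        using \<open>l \<le> p\<close> Game.prems(2) by auto
      then show "lwins_round TB (Game GL GR) q False (Suc l) r"
        using lwins_some_mono[OF tie] lwins_all_mono[OF right] all_gain[OF right]
        by (simp add: lwins_round_def)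
    qed
    then show ?thesis
      using \<open>l \<le> p\<close> Game.prems(2) unfolding lwins_iff_round by (intro exI[of _ "Suc l"]) auto
  qed
qed

lemma lwins_some_dollar_beats_marker:
  "lwins_some TB Gs a UNIV \<Longrightarrow> a < b \<Longrightarrow> lwins_some TB Gs b {False}"
  using lwins_dollar_beats_marker lwins_mono[of TB _ a False b]
  unfolding lwins_some_def by (simp add: ex_bool_eq) blast

lemma lwins_all_dollar_beats_marker:
  "lwins_all TB Gs a {True} \<Longrightarrow> a < b \<Longrightarrow> lwins_all TB Gs b UNIV"
  using lwins_dollar_beats_marker lwins_mono[of TB _ a True b]
  unfolding lwins_all_def by (auto simp: all_bool_eq)

lemma lwins_round_determined:
  "(\<exists>l\<le>p. \<forall>r\<le>TB - p. lwins_round TB G p m l r) \<longleftrightarrow> \<not> (\<exists>r\<le>TB - p. \<forall>l\<le>p. \<not> lwins_round TB G p m l r)"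
proof (cases m)
  case True
  let ?A = "\<lambda>l. lwins_some TB (lopts G) (p - l) UNIV"
  let ?B = "\<lambda>l. lwins_some TB (lopts G) (p - l) {False}"
  let ?C = "\<lambda>r. lwins_all TB (ropts G) (p + r) {True}"
  have "lwins_round TB G p m l r \<longleftrightarrow> bid_outcome ?A ?B ?C l r" for l r
    using True by (auto simp: lwins_round_def bid_outcome_def)
  moreover have "(\<exists>l\<le>p. \<forall>r\<le>TB - p. bid_outcome ?A ?B ?C l r)
      \<longleftrightarrow> \<not> (\<exists>r\<le>TB - p. \<forall>l\<le>p. \<not> bid_outcome ?A ?B ?C l r)"
  proof (rule bidding_determined)
    show "?B x \<Longrightarrow> ?A x" for x
      by (auto simp: lwins_some_def)
    show "?A x \<Longrightarrow> x' < x \<Longrightarrow> x \<le> p \<Longrightarrow> ?B x'" for x x'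
      by (auto intro: lwins_some_dollar_beats_marker)
  qed
  ultimately show ?thesis
    by simp
next
  case False
  \<comment> \<open>Now Right holds the marker: the round is the bidding game seen from his side.\<close>
  let ?A = "\<lambda>r. \<not> lwins_all TB (ropts G) (p + r) UNIV"
  let ?B = "\<lambda>r. \<not> lwins_all TB (ropts G) (p + r) {True}"
  let ?C = "\<lambda>l. \<not> lwins_some TB (lopts G) (p - l) {False}"
  have "lwins_round TB G p m l r \<longleftrightarrow> \<not> bid_outcome ?A ?B ?C r l" for l r
    using False by (auto simp: lwins_round_def bid_outcome_def)
  moreover have "(\<exists>r\<le>TB - p. \<forall>l\<le>p. bid_outcome ?A ?B ?C r l)
      \<longleftrightarrow> \<not> (\<exists>l\<le>p. \<forall>r\<le>TB - p. \<not> bid_outcome ?A ?B ?C r l)"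
  proof (rule bidding_determined)
    show "?B x \<Longrightarrow> ?A x" for x
      by (auto simp: lwins_all_def)
    show "?A x \<Longrightarrow> x' < x \<Longrightarrow> x \<le> TB - p \<Longrightarrow> ?B x'" for x x'
      using lwins_all_dollar_beats_marker[of TB "ropts G" "p + x'" "p + x"] by auto
  qed
  ultimately show ?thesis
    by auto
qed

lemma lwins_gneg: "p \<le> TB \<Longrightarrow> lwins TB (gneg G) (TB - p) (\<not> m) \<longleftrightarrow> \<not> lwins TB G p m"
proof (induction G arbitrary: p m)
  case (Game GL GR)
  have IH: "lwins TB (gneg g) (TB - q) m \<longleftrightarrow> \<not> lwins TB g q (\<not> m)"
    if "g \<in> fset GL \<union> fset GR" "q \<le> TB" for g q m
    using Game.IH(1)[of g q "\<not> m"] Game.IH(2)[of g q "\<not> m"] that by auto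
  have some_neg: "lwins_some TB (gneg |`| GR) (TB - q) M \<longleftrightarrow> \<not> lwins_all TB GR q (Not ` M)"
    if "q \<le> TB" for q M
    using that by (simp add: lwins_some_def lwins_all_def IH)
  have all_neg: "lwins_all TB (gneg |`| GL) (TB - q) M \<longleftrightarrow> \<not> lwins_some TB GL q (Not ` M)"
    if "q \<le> TB" for q M
    using that by (simp add: lwins_some_def lwins_all_def IH)
  \<comment> \<open>Negation exchanges the players, hence the bids.\<close>
  have round_neg: "lwins_round TB (gneg (Game GL GR)) (TB - p) (\<not> m) l r \<longleftrightarrow> \<not> lwins_round TB (Game GL GR) p m r l"
    if "l \<le> TB - p" "r \<le> p" for l r
  proof -
    have "lwins_some TB (gneg |`| GR) (TB - p - l) M \<longleftrightarrow> \<not> lwins_all TB GR (p + l) (Not ` M)" for M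
      using some_neg[of "p + l" M] that Game.prems by simp
    moreover have "TB - (p - r) = TB - p + r"
      using that Game.prems by simp
    then have "lwins_all TB (gneg |`| GL) (TB - p + r) M \<longleftrightarrow> \<not> lwins_some TB GL (p - r) (Not ` M)" for M
      using all_neg[of "p - r" M] Game.prems by simp
    moreover have "Not ` UNIV = UNIV"
      by (rule surjI[of Not Not]) simp
    ultimately show ?thesis
      by (cases m) (auto simp: lwins_round_def)
  qed
  have "lwins TB (gneg (Game GL GR)) (TB - p) (\<not> m) \<longleftrightarrow> (\<exists>l\<le>TB - p. \<forall>r\<le>p. \<not> lwins_round TB (Game GL GR) p m r l)"
  proof -
    have "TB - (TB - p) = p"
      using Game.prems by simp
    then show ?thesis
      unfolding lwins_iff_round using round_neg by (metis (no_types, lifting))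
  qed
  also have "\<dots> \<longleftrightarrow> \<not> lwins TB (Game GL GR) p m"
    unfolding lwins_iff_round lwins_round_determined by blast
  finally show ?case .
qed

section \<open>The order on game forms\<close>

lemma game_ge_iff:
  "game_ge TB G H \<longleftrightarrow> (\<forall>X p m. p \<le> TB \<longrightarrow> lwins TB (gplus H X) p m \<longrightarrow> lwins TB (gplus G X) p m)"
  unfolding game_ge_def outcome_le_def outc_def by auto

lemma game_geD: "game_ge TB G H \<Longrightarrow> p \<le> TB \<Longrightarrow> lwins TB (gplus H X) p m \<Longrightarrow> lwins TB (gplus G X) p m"
  unfolding game_ge_iff by blast

lemma game_ge_refl: "game_ge TB G G"
  by (simp add: game_ge_iff)

lemma game_lt_imp_ge: "game_lt TB G H \<Longrightarrow> game_ge TB H G"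
  by (simp add: game_lt_def game_gt_def)

lemma game_ge_trans [trans]: "game_ge TB G H \<Longrightarrow> game_ge TB H K \<Longrightarrow> game_ge TB G K"
  unfolding game_ge_iff by blast

lemma game_ge_gplus: "game_ge TB G H \<Longrightarrow> game_ge TB (gplus G K) (gplus H K)"
  unfolding game_ge_iff by (simp add: gplus_assoc)

lemma game_ge_gneg: "game_ge TB G H \<Longrightarrow> game_ge TB (gneg H) (gneg G)"
proof (unfold game_ge_iff, intro allI impI)
  fix X p m
  assume "\<forall>X p m. p \<le> TB \<longrightarrow> lwins TB (gplus H X) p m \<longrightarrow> lwins TB (gplus G X) p m"
    and "p \<le> TB" and "lwins TB (gplus (gneg G) X) p m"
  moreover have "gplus (gneg K) X = gneg (gplus K (gneg X))" for K
    by (simp add: gneg_gplus)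
  ultimately show "lwins TB (gplus (gneg H) X) p m"
    using lwins_gneg[of "TB - p" TB _ "\<not> m"] by auto
qed

lemma game_ge_gplus_gneg:
  assumes "game_ge TB A C" and "game_ge TB B (gneg C)" and "game_ge TB (gplus C (gneg C)) gzero"
  shows "game_ge TB (gplus A B) gzero"
proof -
  have "game_ge TB (gplus A B) (gplus C B)"
    using game_ge_gplus[OF assms(1)] .
  also have "game_ge TB (gplus C B) (gplus C (gneg C))"
    using game_ge_gplus[OF assms(2), of C] by (simp add: gplus_comm)
  also have "game_ge TB \<dots> gzero"
    using assms(3) .
  finally show ?thesis .
qed

lemma ropts_gplus_ge:
  assumes "\<And>g. g |\<in>| ropts G \<Longrightarrow> game_ge TB g G" and "\<And>h. h |\<in>| ropts H \<Longrightarrow> game_ge TB h H"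
    and "x |\<in>| ropts (gplus G H)"
  shows "game_ge TB x (gplus G H)"
  using assms game_ge_gplus[of TB _ G H] game_ge_gplus[of TB _ H G]
  by (auto simp: ropts_gplus gplus_comm)

lemma ropts_gneg_ge:
  assumes "\<And>g. g |\<in>| lopts G \<Longrightarrow> game_ge TB G g" and "x |\<in>| ropts (gneg G)"
  shows "game_ge TB x (gneg G)"
  using assms game_ge_gneg by (auto simp: ropts_gneg)

section \<open>Nonnegative games\<close>

lemma lwins_gplus_nonneg: "game_ge TB K gzero \<Longrightarrow> p \<le> TB \<Longrightarrow> lwins TB Z p m \<Longrightarrow> lwins TB (gplus K Z) p m"
  using game_geD[of TB K gzero p Z m] by simp

lemma lwins_gplus_gains_marker:
  assumes K_nonneg: "game_ge TB K gzero"
    and kl: "kl |\<in>| lopts K" and kl_nonneg: "game_ge TB kl gzero"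
    and K_right: "\<And>kr. kr |\<in>| ropts K \<Longrightarrow> game_ge TB kr K"
  shows "q \<le> TB \<Longrightarrow> lwins TB Z q False \<Longrightarrow> lwins TB (gplus K Z) q True"
proof (induction "TB - q" arbitrary: q Z rule: less_induct)
  case less
  from less.prems(2) obtain l where "l \<le> q" and win: "\<forall>r\<le>TB - q. lwins_round TB Z q False l r"
    unfolding lwins_iff_round by blast
  have Z_right: "lwins_all TB (ropts Z) (q + r) {True}" if "l \<le> r" "r \<le> TB - q" for r
    using win that by (auto simp: lwins_round_def lwins_all_def)
  have right: "lwins_all TB (ropts (gplus K Z)) (q + r) {True}"
    if "lwins_all TB (ropts Z) (q + r) {True}" "0 < r" "r \<le> TB - q" for r
  proof -
    have "lwins TB Z (q + r) False"
      using lwins_mono[OF less.prems(2)] by simp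
    then have "lwins TB (gplus K Z) (q + r) True"
      using less.hyps[of "q + r"] that less.prems(1) by simp
    then have "lwins TB (gplus kr Z) (q + r) True" if "kr |\<in>| ropts K" for kr
      using game_geD[OF K_right[OF that]] \<open>r \<le> TB - q\<close> less.prems(1) by simp
    then show ?thesis
      using that lwins_gplus_nonneg[OF K_nonneg] less.prems(1)
      by (auto simp: lwins_all_def ropts_gplus)
  qed
  \<comment> \<open>Left bids one dollar less than in \<open>Z\<close> (or 0); on a tie she moves as in \<open>Z\<close> (or to \<open>kl\<close>).\<close>
  have tie: "lwins_some TB (lopts (gplus K Z)) (q - (l - 1)) {False}"
  proof (cases "l = 0")
    case True
    have "lwins TB (gplus kl Z) q False"
      using lwins_gplus_nonneg[OF kl_nonneg] less.prems by simp
    with True kl show ?thesis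
      by (auto simp: lwins_some_def lopts_gplus)
  next
    case False
    then obtain z where z: "z |\<in>| lopts Z" "lwins TB z (q - l) False"
      using win by (auto simp: lwins_round_def lwins_some_def)
    then have "lwins TB (gplus K z) (q - (l - 1)) False"
      using lwins_mono lwins_gplus_nonneg[OF K_nonneg] less.prems(1) by simp
    with z(1) show ?thesis
      by (auto simp: lwins_some_def lopts_gplus)
  qed
  moreover from tie have "lwins_some TB (lopts (gplus K Z)) (q - (l - 1)) UNIV"
    unfolding lwins_some_def by blast
  ultimately have "lwins_round TB (gplus K Z) q True (l - 1) r" if "r \<le> TB - q" for r
    using right Z_right that by (auto simp: lwins_round_def)
  then show ?case
    using \<open>l \<le> q\<close> unfolding lwins_iff_round by (intro exI[of _ "l - 1"]) auto
qed

lemma game_ge_gzero_by_copying: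
  assumes right_nonneg: "\<And>K. K |\<in>| ropts J \<Longrightarrow> game_ge TB K gzero"
    and right_gains_marker:
      "\<And>K Z q. K |\<in>| ropts J \<Longrightarrow> q \<le> TB \<Longrightarrow> lwins TB Z q False \<Longrightarrow> lwins TB (gplus K Z) q True"
  shows "game_ge TB J gzero"
proof -
  have "lwins TB (gplus J Z) p m" if "p \<le> TB" "lwins TB Z p m" for Z p m
    using that
  proof (induction Z arbitrary: p m)
    case (Game ZL ZR)
    let ?Z = "Game ZL ZR"
    \<comment> \<open>Left copies her strategy for \<open>Z\<close>; a Right move in \<open>J\<close> never hurts her.\<close>
    have J_move: "lwins TB (gplus K ?Z) a True \<and> (\<not> m \<longrightarrow> lwins TB (gplus K ?Z) a False)"
      if "K |\<in>| ropts J" "p \<le> a" "a \<le> TB" for K a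
      using lwins_mono[OF Game.prems(2) \<open>p \<le> a\<close>] that right_nonneg right_gains_marker
        lwins_gplus_nonneg by (cases m) auto
    from Game.prems(2) obtain l where "l \<le> p" and win: "\<forall>r\<le>TB - p. lwins_round TB ?Z p m l r"
      unfolding lwins_iff_round by blast
    have "lwins_round TB (gplus J ?Z) p m l r" if "r \<le> TB - p" for r
    proof (rule lwins_round_transfer)
      show "lwins_round TB ?Z p m l r"
        using win that by simp
      show "lwins_some TB (lopts (gplus J ?Z)) (p - l) M" if "lwins_some TB (lopts ?Z) (p - l) M" for M
      proof -
        from that obtain z \<mu> where "z |\<in>| ZL" "\<mu> \<in> M" "lwins TB z (p - l) \<mu>"
          unfolding lwins_some_def by auto
        then have "lwins TB (gplus J z) (p - l) \<mu>"
          using Game.IH(1) Game.prems(1) by simp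
        with \<open>z |\<in>| ZL\<close> \<open>\<mu> \<in> M\<close> show ?thesis
          by (auto simp: lwins_some_def lopts_gplus)
      qed
      show "lwins_all TB (ropts (gplus J ?Z)) (p + r) {True}" if "lwins_all TB (ropts ?Z) (p + r) {True}"
        using that Game.IH(2) Game.prems(1) J_move \<open>r \<le> TB - p\<close> by (auto simp: lwins_all_def ropts_gplus)
      show "lwins_all TB (ropts (gplus J ?Z)) (p + r) UNIV" if "\<not> m" "lwins_all TB (ropts ?Z) (p + r) UNIV"
        using that Game.IH(2) Game.prems(1) J_move \<open>r \<le> TB - p\<close>
        by (auto simp: lwins_all_def ropts_gplus all_bool_eq)
    qed
    then show ?case
      using \<open>l \<le> p\<close> unfolding lwins_iff_round by auto
  qed
  then show ?thesis
    by (simp add: game_ge_iff)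
qed

section \<open>Numbers\<close>

lemma is_number_lopts:
  assumes "is_number TB G" and "g |\<in>| lopts G"
  shows "is_number TB g" and "game_lt TB g G"
  using assms by (auto elim: is_number.cases)

lemma is_number_ropts:
  assumes "is_number TB G" and "g |\<in>| ropts G"
  shows "is_number TB g" and "game_lt TB G g"
  using assms by (auto elim: is_number.cases)

text \<open>The Right options of \<open>H + -H\<close> are \<open>H\<^sup>R + -H\<close> and \<open>H + -H\<^sup>L\<close>: take \<open>C = H\<^sup>R\<close>
  resp. \<open>C = H\<^sup>L\<close>.\<close>

lemma ropts_gplus_gneg:
  assumes H: "is_number TB H" and K: "K |\<in>| ropts (gplus H (gneg H))"
  obtains A B C where "C |\<in>| lopts H |\<union>| ropts H" and "K = gplus A B"
    and "game_ge TB A C" and "game_ge TB B (gneg C)" and "gplus C (gneg C) |\<in>| lopts K"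
    and "\<And>a. a |\<in>| ropts A \<Longrightarrow> game_ge TB a A" and "\<And>b. b |\<in>| ropts B \<Longrightarrow> game_ge TB b B"
proof -
  have H_right: "game_ge TB h H" if "h |\<in>| ropts H" for h
    using is_number_ropts(2)[OF H that] by (rule game_lt_imp_ge)
  have H_left: "game_ge TB H h" if "h |\<in>| lopts H" for h
    using is_number_lopts(2)[OF H that] by (rule game_lt_imp_ge)
  from K consider (R) hr where "hr |\<in>| ropts H" "K = gplus hr (gneg H)"
    | (L) hl where "hl |\<in>| lopts H" "K = gplus H (gneg hl)"
    by (auto simp: ropts_gplus ropts_gneg)
  then show thesis
  proof cases
    case R
    have "game_ge TB x hr" if "x |\<in>| ropts hr" for x
      using is_number_ropts(2)[OF is_number_ropts(1)[OF H R(1)] that] by (rule game_lt_imp_ge)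
    show thesis
    proof (rule that[of hr hr "gneg H"])
      show "game_ge TB (gneg H) (gneg hr)"
        using game_ge_gneg[OF H_right[OF R(1)]] .
      show "game_ge TB x (gneg H)" if "x |\<in>| ropts (gneg H)" for x
        using ropts_gneg_ge[OF H_left that] .
    qed (use R \<open>\<And>x. x |\<in>| ropts hr \<Longrightarrow> game_ge TB x hr\<close> in \<open>auto simp: lopts_gplus lopts_gneg game_ge_refl\<close>)
  next
    case L
    have "game_ge TB hl x" if "x |\<in>| lopts hl" for x
      using is_number_lopts(2)[OF is_number_lopts(1)[OF H L(1)] that] by (rule game_lt_imp_ge)
    show thesis
    proof (rule that[of hl H "gneg hl"])
      show "game_ge TB x (gneg hl)" if "x |\<in>| ropts (gneg hl)" for x
        using ropts_gneg_ge[OF \<open>\<And>x. x |\<in>| lopts hl \<Longrightarrow> game_ge TB hl x\<close> that] .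
    qed (use L H_left H_right in \<open>auto simp: lopts_gplus game_ge_refl\<close>)
  qed
qed

lemma gplus_gneg_ge_gzero: "is_number TB H \<Longrightarrow> game_ge TB (gplus H (gneg H)) gzero"
proof (induction H rule: is_number.induct)
  case (1 HL HR)
  let ?H = "Game HL HR"
  have H: "is_number TB ?H"
    using "1" by (auto intro: is_number.intros)
  have right_option: "game_ge TB K gzero \<and> (\<forall>Z q. q \<le> TB \<longrightarrow> lwins TB Z q False \<longrightarrow> lwins TB (gplus K Z) q True)"
    if K: "K |\<in>| ropts (gplus ?H (gneg ?H))" for K
  proof -
    obtain A B C where "C |\<in>| lopts ?H |\<union>| ropts ?H" and "K = gplus A B"
      and "game_ge TB A C" and "game_ge TB B (gneg C)" and "gplus C (gneg C) |\<in>| lopts K"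
      and "\<And>a. a |\<in>| ropts A \<Longrightarrow> game_ge TB a A" and "\<And>b. b |\<in>| ropts B \<Longrightarrow> game_ge TB b B"
      using ropts_gplus_gneg[OF H K] by blast
    moreover from \<open>C |\<in>| lopts ?H |\<union>| ropts ?H\<close> have "game_ge TB (gplus C (gneg C)) gzero"
      using "1" by auto
    ultimately show ?thesis
      using lwins_gplus_gains_marker[of TB K "gplus C (gneg C)"] game_ge_gplus_gneg ropts_gplus_ge
      by metis
  qed
  show ?case
    by (rule game_ge_gzero_by_copying) (use right_option in auto)
qed

lemma gzero_ge_gplus_gneg: "is_number TB H \<Longrightarrow> game_ge TB gzero (gplus H (gneg H))"
  using game_ge_gneg[OF gplus_gneg_ge_gzero] by (simp add: gneg_gplus gplus_comm)

lemma game_lt_gplus: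
  assumes "game_lt TB G G'" and H: "is_number TB H"
  shows "game_lt TB (gplus G H) (gplus G' H)"
proof -
  have "game_ge TB (gplus G' H) (gplus G H)"
    using assms(1) by (simp add: game_lt_imp_ge game_ge_gplus)
  moreover have "\<not> game_ge TB (gplus G H) (gplus G' H)"
  proof
    have cancel: "game_ge TB X (gplus X (gplus H (gneg H)))" "game_ge TB (gplus X (gplus H (gneg H))) X" for X
      using game_ge_gplus[OF gzero_ge_gplus_gneg[OF H], of X] game_ge_gplus[OF gplus_gneg_ge_gzero[OF H], of X]
      by (simp_all add: gplus_comm)
    assume "game_ge TB (gplus G H) (gplus G' H)"
    then have "game_ge TB (gplus G (gplus H (gneg H))) (gplus G' (gplus H (gneg H)))"
      using game_ge_gplus[of TB "gplus G H" "gplus G' H" "gneg H"] by (simp add: gplus_assoc)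
    then have "game_ge TB G G'"
      using cancel game_ge_trans by meson
    with assms(1) show False
      by (simp add: game_lt_def game_gt_def)
  qed
  ultimately show ?thesis
    by (simp add: game_lt_def game_gt_def)
qed

lemma is_number_gplusI:
  assumes G: "is_number TB G" and H: "is_number TB H"
    and "\<And>x. x |\<in>| lopts (gplus G H) \<Longrightarrow> is_number TB x"
    and "\<And>x. x |\<in>| ropts (gplus G H) \<Longrightarrow> is_number TB x"
  shows "is_number TB (gplus G H)"
proof -
  have lt_H: "game_lt TB (gplus G X) (gplus G Y)" if "game_lt TB X Y" for X Y
    using game_lt_gplus[OF that G] by (simp add: gplus_comm)
  have "game_lt TB x (gplus G H)" if "x |\<in>| lopts (gplus G H)" for x
    using that game_lt_gplus[OF is_number_lopts(2)[OF G] H] lt_H[OF is_number_lopts(2)[OF H]]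
    by (auto simp: lopts_gplus)
  moreover have "game_lt TB (gplus G H) x" if "x |\<in>| ropts (gplus G H)" for x
    using that game_lt_gplus[OF is_number_ropts(2)[OF G] H] lt_H[OF is_number_ropts(2)[OF H]]
    by (auto simp: ropts_gplus)
  ultimately show ?thesis
    using assms(3,4) by (cases "gplus G H") (auto intro: is_number.intros)
qed

theorem mainTheorem9:
  fixes TB :: nat and G H :: game
  assumes "is_number TB G" and "is_number TB H"
  shows "is_number TB (gplus G H)"
  using assms
proof (induction G arbitrary: H rule: game.induct)
  case G: (Game GL GR)
  from G.prems(2) show ?case
  proof (induction H rule: game.induct)
    case H: (Game HL HR)
    show ?case
      using G.prems(1) H.prems
    proof (rule is_number_gplusI)
      show "is_number TB x" if "x |\<in>| lopts (gplus (Game GL GR) (Game HL HR))" for x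
        using that G.IH(1) H.IH(1) G.prems(1) H.prems is_number_lopts(1) by (auto simp: lopts_gplus)
      show "is_number TB x" if "x |\<in>| ropts (gplus (Game GL GR) (Game HL HR))" for x
        using that G.IH(2) H.IH(2) G.prems(1) H.prems is_number_ropts(1) by (auto simp: ropts_gplus)
    qed
  qed
qed

end
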